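(* Assume $\gamma:=\sum_{k,m\ge1}p_kp_m\gamma_{k,m}<\infty$, where $\gamma_{k,m}\in(0,\infty]$ is the mean of $\tilde\mu_{k,m}$. Define the probability measure $\mathbf{P}$ on weighted rooted trees by $\mathbf{E}[f(\mathbf{T},\mathbf{o},\xi)]=\frac1\gamma\mathbb{E}\big[\mathfrak{m}(\mathbf{T},\mathbf{o},\xi)f(\mathbf{T},\mathbf{o},\xi)\big]$ with $\mathfrak{m}(\mathbf{T},\mathbf{o},\xi)=\pi_{\mathbf{o}}/(\hat\iota(\mathbf{o})+1)$, the scalar product $(f,g)=\mathbf{E}[f(\mathbf{T},\mathbf{o},\xi)g(\mathbf{T},\mathbf{o},\xi)]$, and the operator $Gf(\mathbf{T},\mathbf{o},\xi)=\frac{1}{\pi_{\mathbf{o}}}\sum_{z\sim\mathbf{o}}\xi(\mathbf{o},z)f(\mathbf{T},z,\xi)$. Then for any $f,g\in L_2(\mathbf{P})$ we have $(f,Gg)=(Gf,g)$.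
   Context: Let $(p_j)_{j\ge 0}$ be an offspring distribution with $p_0=0$ and $\mu:=\sum_{j\ge1} j p_j\in(1,\infty)$. For a vertex $x$ of a locally finite tree, its index is $\hat\iota(x)=\deg(x)-1$. For every unordered pair $\{k,m\}$ of positive integers let $\tilde\mu_{k,m}=\tilde\mu_{m,k}$ be a probability law on $(0,\infty)$ with mean $\gamma_{k,m}\in(0,\infty]$. The augmented weighted Galton--Watson tree (law $\mathbb{P}$, expectation $\mathbb{E}$) is constructed as follows: choose $k\ge1$ with probability $p_k$; the root $\mathbf{o}$ has $k+1$ neighbours $w_0,\dots,w_k$ joined by edges $\ell_0,\dots,\ell_k$; each $w_j$ is the root of an independent Galton--Watson tree with offspring law $(p_j)$ (so every non-root vertex has index equal to its number of children). Conditionally on the tree, the conductances $\xi(e)>0$ are independent, an edge joining vertices of indices $k$ and $m$ having law $\tilde\mu_{k,m}$. Write $\pi_x=\sum_{z\sim x}\xi(x,z)$. Functions $f,g$ are (measurable, isomorphism-invariant) functions on the space of rooted weighted trees $(\mathbf{T},\mathbf{o},\xi)$; $f(\mathbf{T},z,\xi)$ denotes $f$ evaluated at the same weighted tree re-rooted at $z$. *)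

theory Defs
  imports "HOL-Probability.Probability"
begin

text \<open>Rooted weighted graphs on the label set nat list: a symmetric weight function
  (edges = pairs with positive weight) together with a root.\<close>
type_synonym wtree = "(nat list \<Rightarrow> nat list \<Rightarrow> real) \<times> nat list"

definition nbrs :: "wtree \<Rightarrow> nat list set" where
  "nbrs t = {z. 0 < fst t (snd t) z}"

definition pi_root :: "wtree \<Rightarrow> real" where
  "pi_root t = (\<Sum>z\<in>nbrs t. fst t (snd t) z)"

definition reroot :: "wtree \<Rightarrow> nat list \<Rightarrow> wtree" where
  "reroot t z = (fst t, z)"

definition Gop :: "(wtree \<Rightarrow> real) \<Rightarrow> wtree \<Rightarrow> real" where
  "Gop f t = (\<Sum>z\<in>nbrs t. fst t (snd t) z * f (reroot t z)) / pi_root t"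

text \<open>m(T,o,xi) = pi_o / (index(o) + 1) = pi_o / deg(o).\<close>
definition mass :: "wtree \<Rightarrow> real" where
  "mass t = pi_root t / real (card (nbrs t))"

definition iso_invariant :: "(wtree \<Rightarrow> real) \<Rightarrow> bool" where
  "iso_invariant f \<longleftrightarrow>
     (\<forall>\<phi> w r. bij \<phi> \<longrightarrow> f (\<lambda>x y. w (\<phi> x) (\<phi> y), inv \<phi> r) = f (w, r))"

definition tree_space :: "wtree measure" where
  "tree_space = (PiM UNIV (\<lambda>_. PiM UNIV (\<lambda>_. borel))) \<Otimes>\<^sub>M count_space UNIV"

text \<open>Ulam-Harris labels: child j of v is j # v, parent of c is tl c.
  N v is the offspring variable at v; the root has N [] + 1 children.\<close>
definition nch :: "(nat list \<Rightarrow> nat) \<Rightarrow> nat list \<Rightarrow> nat" where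
  "nch N v = (if v = [] then N v + 1 else N v)"

fun inT :: "(nat list \<Rightarrow> nat) \<Rightarrow> nat list \<Rightarrow> bool" where
  "inT N [] = True"
| "inT N (j # v) = (inT N v \<and> j < nch N v)"

text \<open>Conductance of the edge between c and its parent: U at (c, index parent, index c).\<close>
definition edge_w :: "(nat list \<Rightarrow> nat) \<Rightarrow> (nat list \<times> nat \<times> nat \<Rightarrow> real) \<Rightarrow> nat list \<Rightarrow> real" where
  "edge_w N U c = U (c, N (tl c), N c)"

definition gw_weights ::
  "(nat list \<Rightarrow> nat) \<Rightarrow> (nat list \<times> nat \<times> nat \<Rightarrow> real) \<Rightarrow> nat list \<Rightarrow> nat list \<Rightarrow> real" where
  "gw_weights N U x y =
     (if y \<noteq> [] \<and> tl y = x \<and> inT N y then edge_w N U y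
      else if x \<noteq> [] \<and> tl x = y \<and> inT N x then edge_w N U x
      else 0)"

definition cond_law :: "(nat \<Rightarrow> nat \<Rightarrow> real measure) \<Rightarrow> nat \<Rightarrow> nat \<Rightarrow> real measure" where
  "cond_law \<mu> k m = (if 1 \<le> k \<and> 1 \<le> m then \<mu> k m else return borel 1)"

definition sample_space ::
  "nat pmf \<Rightarrow> (nat \<Rightarrow> nat \<Rightarrow> real measure) \<Rightarrow> ((nat list \<Rightarrow> nat) \<times> (nat list \<times> nat \<times> nat \<Rightarrow> real)) measure" where
  "sample_space p \<mu> =
     PiM UNIV (\<lambda>_::nat list. measure_pmf p) \<Otimes>\<^sub>M
     PiM UNIV (\<lambda>(c::nat list, k, m). cond_law \<mu> k m)"

definition augGW :: "nat pmf \<Rightarrow> (nat \<Rightarrow> nat \<Rightarrow> real measure) \<Rightarrow> wtree measure" where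
  "augGW p \<mu> = distr (sample_space p \<mu>) tree_space (\<lambda>\<omega>. (gw_weights (fst \<omega>) (snd \<omega>), []))"

definition gamma_km :: "(nat \<Rightarrow> nat \<Rightarrow> real measure) \<Rightarrow> nat \<Rightarrow> nat \<Rightarrow> ennreal" where
  "gamma_km \<mu> k m = (\<integral>\<^sup>+ x. ennreal x \<partial>\<mu> k m)"

definition gamma_const :: "nat pmf \<Rightarrow> (nat \<Rightarrow> nat \<Rightarrow> real measure) \<Rightarrow> ennreal" where
  "gamma_const p \<mu> =
     (\<integral>\<^sup>+ k. \<integral>\<^sup>+ m. ennreal (pmf p k * pmf p m) * gamma_km \<mu> k m
        \<partial>count_space {1..} \<partial>count_space {1..})"

definition Pstat :: "nat pmf \<Rightarrow> (nat \<Rightarrow> nat \<Rightarrow> real measure) \<Rightarrow> wtree measure" where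
  "Pstat p \<mu> = density (augGW p \<mu>) (\<lambda>t. ennreal (mass t / enn2real (gamma_const p \<mu>)))"

end

theory Submission
  imports Defs "HOL-Combinatorics.Transposition"
begin

text \<open>
  By the density of \<open>Pstat\<close>, \<open>\<gamma> (f, G g)\<close> is the \<open>augGW\<close>-integral of
  \<open>f(o) \<Sum>\<^sub>z \<xi>(o, z) g(z) / deg o\<close>, and it suffices to show that this is symmetric in
  \<open>f\<close> and \<open>g\<close> (for non-negative functions first; integrability then follows from
  \<open>2ab \<le> a\<^sup>2 + b\<^sup>2\<close> and the \<open>L\<^sub>2\<close> assumptions). The factor \<open>1 / deg o\<close> averages over the
  \<open>N + 1\<close> children of the root. Exchanging the branches \<open>[0]\<close> and \<open>[j]\<close> preserves the law of
  the augmented tree, so every child contributes like the child \<open>[0]\<close>, and the integral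
  equals that of \<open>\<xi>(o, [0]) f(o) g([0])\<close>. Re-rooting at \<open>[0]\<close> also preserves the law: the
  root has one child more than the other vertices precisely so that the old root becomes an
  ordinary child \<open>[0]\<close> of the new one, and the symmetry of \<open>\<mu>\<close> takes care of the
  conductance of the edge between them. This swaps the roles of \<open>f\<close> and \<open>g\<close>.
\<close>

section \<open>Relabellings of the augmented Galton--Watson tree\<close>

definition is_child :: "(nat list \<Rightarrow> nat) \<Rightarrow> nat list \<Rightarrow> nat list \<Rightarrow> bool" where
  "is_child N x y \<longleftrightarrow> y \<noteq> [] \<and> tl y = x \<and> inT N y"

lemma gw_weights_is_child:
  "gw_weights N U x y =
     (if is_child N x y then edge_w N U y else if is_child N y x then edge_w N U x else 0)"
  unfolding gw_weights_def is_child_def ..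

lemma not_is_child_both: "\<not> (is_child N x y \<and> is_child N y x)"
proof
  assume "is_child N x y \<and> is_child N y x"
  then have "length x < length y" "length y < length x"
    by (auto simp: is_child_def neq_Nil_conv)
  then show False by simp
qed

lemma gw_weights_sym: "gw_weights N U x y = gw_weights N U y x"
  using not_is_child_both[of N x y] by (auto simp: gw_weights_is_child)

lemma gw_weights_nonneg: "(\<And>i. 0 \<le> U i) \<Longrightarrow> 0 \<le> gw_weights N U x y"
  by (simp add: gw_weights_def edge_w_def)

lemma gw_weights_relabel:
  assumes edges: "\<And>x y. is_child N' x y \<or> is_child N' y x \<longleftrightarrow>
                          is_child N (\<phi> x) (\<phi> y) \<or> is_child N (\<phi> y) (\<phi> x)"
    and weights: "\<And>x y. is_child N' x y \<Longrightarrow> edge_w N' U' y = gw_weights N U (\<phi> x) (\<phi> y)"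
  shows "gw_weights N' U' x y = gw_weights N U (\<phi> x) (\<phi> y)"
proof -
  have "gw_weights N U (\<phi> x) (\<phi> y) = 0" if "\<not> is_child N' x y" "\<not> is_child N' y x"
    using that edges[of x y] by (auto simp: gw_weights_is_child)
  then show ?thesis
    using weights[of x y] weights[of y x] gw_weights_sym[of N U "\<phi> x"]
    by (auto simp: gw_weights_is_child[of N'])
qed

text \<open>Re-rooting at \<open>[0]\<close>: the old root becomes the child \<open>[0]\<close> of the new one.\<close>

fun flip_root :: "nat list \<Rightarrow> nat list" where
  "flip_root [] = [0]"
| "flip_root [0] = []"
| "flip_root [Suc i] = [i, 0]"
| "flip_root [a, 0] = [Suc a]"
| "flip_root (a # v) = a # flip_root v"

lemma flip_root_Cons_Cons:
  "flip_root (a # b # u) = (if b = 0 \<and> u = [] then [Suc a] else a # flip_root (b # u))"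
  by (cases b; cases u) auto

lemma flip_root_Cons: "v \<noteq> [] \<Longrightarrow> v \<noteq> [0] \<Longrightarrow> flip_root (a # v) = a # flip_root v"
  by (cases v) (auto simp: flip_root_Cons_Cons)

lemma flip_root_eq_Nil_iff [simp]: "flip_root y = [] \<longleftrightarrow> y = [0]"
  by (cases y rule: flip_root.cases) auto

lemma flip_root_eq_0_iff [simp]: "flip_root y = [0] \<longleftrightarrow> y = []"
  by (induction y rule: flip_root.induct) auto

lemma flip_root_flip_root [simp]: "flip_root (flip_root x) = x"
  by (induction x rule: flip_root.induct) (auto simp: flip_root_Cons)

lemma flip_root_inject [simp]: "flip_root x = flip_root y \<longleftrightarrow> x = y"
  by (metis flip_root_flip_root)

lemma tl_flip_root: "y \<noteq> [] \<Longrightarrow> y \<noteq> [0] \<Longrightarrow> tl (flip_root y) = flip_root (tl y)"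
  by (cases y rule: flip_root.cases) (auto simp: flip_root_Cons)

lemma inT_flip_root: "inT (N \<circ> flip_root) y = inT N (flip_root y)"
  by (induction y rule: flip_root.induct) (auto simp: nch_def flip_root_Cons)

lemma is_child_flip_root:
  assumes "(x, y) \<noteq> ([], [0])" "(x, y) \<noteq> ([0], [])"
  shows "is_child (N \<circ> flip_root) x y \<longleftrightarrow> is_child N (flip_root x) (flip_root y)"
proof -
  have "y \<noteq> [] \<and> tl y = x \<longleftrightarrow> flip_root y \<noteq> [] \<and> tl (flip_root y) = flip_root x"
  proof (cases "y = [] \<or> y = [0]")
    case True
    with assms show ?thesis by (cases x rule: flip_root.cases) auto
  next
    case False
    then show ?thesis by (auto simp: tl_flip_root)
  qed
  then show ?thesis
    unfolding is_child_def inT_flip_root by blast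
qed

lemma is_child_Nil_0: "is_child N [] [0]"
  by (simp add: is_child_def nch_def)

text \<open>
  The edge between \<open>[]\<close> and \<open>[0]\<close> keeps its label \<open>[0]\<close> but parent and child trade places;
  this is where the symmetry of \<open>\<mu>\<close> is used.
\<close>

definition flip_root_idx :: "nat list \<times> nat \<times> nat \<Rightarrow> nat list \<times> nat \<times> nat" where
  "flip_root_idx = (\<lambda>(c, k, m).
     if c = [0] then ([0], m, k) else if c = [] then ([], k, m) else (flip_root c, k, m))"

lemma flip_root_idx_flip_root_idx: "flip_root_idx (flip_root_idx i) = i"
  by (auto simp: flip_root_idx_def split: prod.splits)

lemma gw_weights_flip_root:
  "gw_weights (N \<circ> flip_root) (U \<circ> flip_root_idx) x y
     = gw_weights N U (flip_root x) (flip_root y)"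
proof (rule gw_weights_relabel)
  fix x y
  show "is_child (N \<circ> flip_root) x y \<or> is_child (N \<circ> flip_root) y x \<longleftrightarrow>
        is_child N (flip_root x) (flip_root y) \<or> is_child N (flip_root y) (flip_root x)"
    using is_child_flip_root[of x y N] is_child_flip_root[of y x N]
      is_child_Nil_0[of N] is_child_Nil_0[of "N \<circ> flip_root"]
    by (cases "(x, y) = ([], [0]) \<or> (x, y) = ([0], [])") auto
  assume child: "is_child (N \<circ> flip_root) x y"
  show "edge_w (N \<circ> flip_root) (U \<circ> flip_root_idx) y = gw_weights N U (flip_root x) (flip_root y)"
  proof (cases "y = [0]")
    case True
    with child have "x = []" by (simp add: is_child_def)
    with True show ?thesis
      using is_child_Nil_0[of N] gw_weights_sym[of N U "[0]" "[]"]
      by (simp add: edge_w_def flip_root_idx_def gw_weights_is_child)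
  next
    case False
    with child have "y \<noteq> []" "(x, y) \<noteq> ([], [0])" "(x, y) \<noteq> ([0], [])"
      by (auto simp: is_child_def)
    with child is_child_flip_root[of x y N] False show ?thesis
      by (simp add: edge_w_def flip_root_idx_def gw_weights_is_child tl_flip_root)
  qed
qed

text \<open>Exchanges the branches at \<open>[0]\<close> and \<open>[j]\<close>; the branch of a label is its last entry.\<close>

fun swap_branch :: "nat \<Rightarrow> nat list \<Rightarrow> nat list" where
  "swap_branch j [] = []"
| "swap_branch j [a] = [Transposition.transpose 0 j a]"
| "swap_branch j (a # b # u) = a # swap_branch j (b # u)"

lemma swap_branch_eq_Nil_iff [simp]: "swap_branch j y = [] \<longleftrightarrow> y = []"
  by (induction j y rule: swap_branch.induct) auto

lemma swap_branch_Cons: "v \<noteq> [] \<Longrightarrow> swap_branch j (a # v) = a # swap_branch j v"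
  by (cases v) auto

lemma swap_branch_swap_branch [simp]: "swap_branch j (swap_branch j x) = x"
  by (induction j x rule: swap_branch.induct) (auto simp: swap_branch_Cons)

lemma swap_branch_inject [simp]: "swap_branch j x = swap_branch j y \<longleftrightarrow> x = y"
  by (metis swap_branch_swap_branch)

lemma tl_swap_branch: "tl (swap_branch j y) = swap_branch j (tl y)"
  by (induction j y rule: swap_branch.induct) auto

lemma inT_swap_branch:
  "j < nch N [] \<Longrightarrow> inT (N \<circ> swap_branch j) y = inT N (swap_branch j y)"
  by (induction y) (auto simp: swap_branch_Cons nch_def Transposition.transpose_def neq_Nil_conv)

definition swap_branch_idx :: "nat \<Rightarrow> nat list \<times> nat \<times> nat \<Rightarrow> nat list \<times> nat \<times> nat" where
  "swap_branch_idx j = (\<lambda>(c, k, m). (swap_branch j c, k, m))"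

lemma swap_branch_idx_swap_branch_idx: "swap_branch_idx j (swap_branch_idx j i) = i"
  by (auto simp: swap_branch_idx_def split: prod.splits)

lemma gw_weights_swap_branch:
  assumes "j < nch N []"
  shows "gw_weights (N \<circ> swap_branch j) (U \<circ> swap_branch_idx j) x y
           = gw_weights N U (swap_branch j x) (swap_branch j y)"
proof (rule gw_weights_relabel)
  have child: "is_child (N \<circ> swap_branch j) x y \<longleftrightarrow> is_child N (swap_branch j x) (swap_branch j y)"
    for x y
    using assms by (auto simp: is_child_def inT_swap_branch tl_swap_branch)
  fix x y
  show "is_child (N \<circ> swap_branch j) x y \<or> is_child (N \<circ> swap_branch j) y x \<longleftrightarrow>
        is_child N (swap_branch j x) (swap_branch j y)
          \<or> is_child N (swap_branch j y) (swap_branch j x)"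
    by (simp only: child)
  assume "is_child (N \<circ> swap_branch j) x y"
  then have "is_child N (swap_branch j x) (swap_branch j y)" by (simp only: child)
  then show "edge_w (N \<circ> swap_branch j) (U \<circ> swap_branch_idx j) y
               = gw_weights N U (swap_branch j x) (swap_branch j y)"
    by (simp add: gw_weights_is_child edge_w_def swap_branch_idx_def tl_swap_branch)
qed

section \<open>Invariance of the sample space under relabelling\<close>

lemma bij_involution: "(\<And>x. f (f x) = x) \<Longrightarrow> bij f"
  by (metis bij_betw_byWitness subset_UNIV surj_def)

lemma measurable_PiM_comp:
  assumes "\<And>i. M (b i) = M i"
  shows "(\<lambda>\<omega>. \<omega> \<circ> b) \<in> measurable (PiM UNIV M) (PiM UNIV M)"
proof -
  have "(\<lambda>\<omega> i. \<omega> (b i)) \<in> measurable (PiM UNIV M) (PiM UNIV M)"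
  proof (rule measurable_PiM_single')
    show "(\<lambda>\<omega>. \<omega> (b i)) \<in> measurable (PiM UNIV M) (M i)" for i
      using measurable_component_singleton[of "b i" UNIV M] assms[of i] by simp
    show "(\<lambda>\<omega> i. \<omega> (b i)) \<in> space (PiM UNIV M) \<rightarrow> (\<Pi>\<^sub>E i\<in>UNIV. space (M i))"
      by (auto simp: space_PiM PiE_iff) (metis assms)
  qed
  then show ?thesis by (simp add: o_def)
qed

lemma distr_PiM_comp_bij:
  assumes M: "\<And>i. prob_space (M i)" and b: "bij b" and Mb: "\<And>i. M (b i) = M i"
  shows "distr (PiM UNIV M) (PiM UNIV M) (\<lambda>\<omega>. \<omega> \<circ> b) = PiM UNIV M"
proof -
  have e: "(\<lambda>i. M (b i)) = M" using Mb by auto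
  have "distr (PiM UNIV M) (PiM UNIV M) (\<lambda>\<omega>. \<omega> \<circ> b)
      = distr (PiM UNIV M) (\<Pi>\<^sub>M i\<in>UNIV. M (b i)) (\<lambda>\<omega>. \<lambda>n\<in>UNIV. \<omega> (b n))"
    unfolding e by (rule distr_cong) (auto simp: restrict_def o_def)
  also have "\<dots> = (\<Pi>\<^sub>M i\<in>UNIV. M (b i))"
    using b M by (intro distr_PiM_reindex) (auto simp: bij_def)
  finally show ?thesis by (simp only: e)
qed

lemma distr_pair_measure_map_prod:
  assumes f: "f \<in> measurable M M" "distr M M f = M"
    and g: "g \<in> measurable N N" "distr N N g = N" and "sigma_finite_measure N"
  shows "distr (M \<Otimes>\<^sub>M N) (M \<Otimes>\<^sub>M N) (map_prod f g) = M \<Otimes>\<^sub>M N"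
  using pair_measure_distr[OF f(1) g(1)] assms by (simp add: map_prod_def split_beta')

type_synonym gw_sample = "(nat list \<Rightarrow> nat) \<times> (nat list \<times> nat \<times> nat \<Rightarrow> real)"

definition gw_tree :: "gw_sample \<Rightarrow> wtree" where
  "gw_tree \<omega> = (gw_weights (fst \<omega>) (snd \<omega>), [])"

lemma augGW_def': "augGW p \<mu> = distr (sample_space p \<mu>) tree_space gw_tree"
  unfolding augGW_def gw_tree_def ..

locale weighted_GW =
  fixes p :: "nat pmf" and \<mu> :: "nat \<Rightarrow> nat \<Rightarrow> real measure"
  assumes mu_prob: "\<And>k m. 1 \<le> k \<Longrightarrow> 1 \<le> m \<Longrightarrow> prob_space (\<mu> k m)"
    and mu_borel: "\<And>k m. 1 \<le> k \<Longrightarrow> 1 \<le> m \<Longrightarrow> sets (\<mu> k m) = sets borel"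
    and mu_pos: "\<And>k m. 1 \<le> k \<Longrightarrow> 1 \<le> m \<Longrightarrow> emeasure (\<mu> k m) {0<..} = 1"
    and mu_sym: "\<And>k m. 1 \<le> k \<Longrightarrow> 1 \<le> m \<Longrightarrow> \<mu> k m = \<mu> m k"
begin

abbreviation "\<Omega> \<equiv> sample_space p \<mu>"
abbreviation "offspring_space \<equiv> PiM UNIV (\<lambda>_::nat list. measure_pmf p)"
abbreviation "edge_law \<equiv> (\<lambda>(c::nat list, k::nat, m::nat). cond_law \<mu> k m)"
abbreviation "conductance_space \<equiv> PiM UNIV edge_law"

lemma prob_space_cond_law: "prob_space (cond_law \<mu> k m)"
  unfolding cond_law_def using mu_prob by (auto intro: prob_space_return)

lemma sets_cond_law: "sets (cond_law \<mu> k m) = sets borel"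
  unfolding cond_law_def using mu_borel by auto

lemma cond_law_sym: "cond_law \<mu> k m = cond_law \<mu> m k"
  unfolding cond_law_def using mu_sym by auto

lemma cond_law_pos: "emeasure (cond_law \<mu> k m) {0<..} = 1"
  unfolding cond_law_def using mu_pos by (auto simp: emeasure_return)

lemma prob_space_conductance_space: "prob_space conductance_space"
  by (intro prob_space_PiM) (auto simp: prob_space_cond_law)

lemma sample_space_relabel_invariant:
  assumes a: "bij a" and b: "bij b" and edge_law_b: "\<And>i. edge_law (b i) = edge_law i"
  shows "distr \<Omega> \<Omega> (map_prod (\<lambda>N. N \<circ> a) (\<lambda>U. U \<circ> b)) = \<Omega>"
  unfolding sample_space_def
proof (rule distr_pair_measure_map_prod)
  show "(\<lambda>N. N \<circ> a) \<in> measurable offspring_space offspring_space"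
    by (rule measurable_PiM_comp) simp
  show "distr offspring_space offspring_space (\<lambda>N. N \<circ> a) = offspring_space"
    using a by (intro distr_PiM_comp_bij) (auto simp: prob_space_measure_pmf)
  show "(\<lambda>U. U \<circ> b) \<in> measurable conductance_space conductance_space"
    using edge_law_b by (rule measurable_PiM_comp)
  show "distr conductance_space conductance_space (\<lambda>U. U \<circ> b) = conductance_space"
    using b edge_law_b
    by (intro distr_PiM_comp_bij) (auto simp: prob_space_cond_law split: prod.splits)
  show "sigma_finite_measure conductance_space"
    using prob_space_conductance_space by (rule prob_space_imp_sigma_finite)
qed

lemma nn_integral_relabel:
  assumes F: "F \<in> borel_measurable \<Omega>" and a: "bij a" and b: "bij b"
    and edge_law_b: "\<And>i. edge_law (b i) = edge_law i"
  shows "(\<integral>\<^sup>+\<omega>. F \<omega> \<partial>\<Omega>) = (\<integral>\<^sup>+\<omega>. F (fst \<omega> \<circ> a, snd \<omega> \<circ> b) \<partial>\<Omega>)"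
proof -
  have "(\<lambda>N. N \<circ> a) \<in> measurable offspring_space offspring_space"
    by (rule measurable_PiM_comp) simp
  moreover have "(\<lambda>U. U \<circ> b) \<in> measurable conductance_space conductance_space"
    using edge_law_b by (rule measurable_PiM_comp)
  ultimately have m: "map_prod (\<lambda>N. N \<circ> a) (\<lambda>U. U \<circ> b) \<in> measurable \<Omega> \<Omega>"
    unfolding sample_space_def map_prod_def split_beta' by measurable
  have "(\<integral>\<^sup>+\<omega>. F \<omega> \<partial>\<Omega>) = (\<integral>\<^sup>+\<omega>. F \<omega> \<partial>distr \<Omega> \<Omega> (map_prod (\<lambda>N. N \<circ> a) (\<lambda>U. U \<circ> b)))"
    by (simp only: sample_space_relabel_invariant[OF a b edge_law_b])
  also have "\<dots> = (\<integral>\<^sup>+\<omega>. F (fst \<omega> \<circ> a, snd \<omega> \<circ> b) \<partial>\<Omega>)"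
    by (subst nn_integral_distr[OF m]) (auto simp: F map_prod_def split_beta)
  finally show ?thesis .
qed

lemma measurable_offspring [measurable]: "(\<lambda>\<omega>. fst \<omega> v) \<in> measurable \<Omega> (count_space UNIV)"
proof -
  have "(\<lambda>N. N v) \<in> measurable offspring_space (count_space UNIV)"
    by (rule measurable_compose[of _ _ "measure_pmf p"]) simp_all
  then show ?thesis unfolding sample_space_def by simp
qed

lemma measurable_conductance [measurable]: "(\<lambda>\<omega>. snd \<omega> i) \<in> borel_measurable \<Omega>"
proof -
  have "(\<lambda>U. U i) \<in> measurable conductance_space (edge_law i)" by simp
  also have "measurable conductance_space (edge_law i) = borel_measurable conductance_space"
    by (rule measurable_cong_sets) (auto simp: sets_cond_law split: prod.splits)
  finally show ?thesis unfolding sample_space_def by simp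
qed

lemma measurable_conductance_at_offspring [measurable]:
  "(\<lambda>\<omega>. snd \<omega> (c, fst \<omega> a, fst \<omega> b)) \<in> borel_measurable \<Omega>"
proof -
  have "(\<lambda>\<omega>. (fst \<omega> a, fst \<omega> b)) \<in> measurable \<Omega> (count_space UNIV \<Otimes>\<^sub>M count_space UNIV)"
    by measurable
  then have "(\<lambda>\<omega>. (fst \<omega> a, fst \<omega> b)) \<in> measurable \<Omega> (count_space UNIV)"
    by (simp add: pair_measure_countable)
  then show ?thesis
    using measurable_compose_countable[where f="\<lambda>(k, m) \<omega>. snd \<omega> (c, k, m)"] by simp
qed

lemma measurable_inT [measurable]: "Measurable.pred \<Omega> (\<lambda>\<omega>. inT (fst \<omega>) y)"
proof (induction y)
  case (Cons j v)
  have "(\<lambda>\<omega>. nch (fst \<omega>) v) \<in> measurable \<Omega> (count_space UNIV)"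
    unfolding nch_def by (cases "v = []") simp_all
  with Cons show ?case by simp
qed simp

lemma measurable_gw_weights [measurable]:
  "(\<lambda>\<omega>. gw_weights (fst \<omega>) (snd \<omega>) x y) \<in> borel_measurable \<Omega>"
  unfolding gw_weights_def edge_w_def by measurable

lemma measurable_gw_tree [measurable]: "gw_tree \<in> measurable \<Omega> tree_space"
proof -
  have "(\<lambda>\<omega> x. gw_weights (fst \<omega>) (snd \<omega>) x) \<in> measurable \<Omega> (PiM UNIV (\<lambda>_. PiM UNIV (\<lambda>_. borel)))"
  proof (rule measurable_PiM_single')
    show "(\<lambda>\<omega>. gw_weights (fst \<omega>) (snd \<omega>) x) \<in> measurable \<Omega> (PiM UNIV (\<lambda>_. borel))" for x
      by (rule measurable_PiM_single') (auto simp: space_PiM)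
  qed (auto simp: space_PiM)
  then show ?thesis unfolding tree_space_def gw_tree_def by simp
qed

lemma AE_conductances_pos: "AE \<omega> in \<Omega>. \<forall>i. 0 < snd \<omega> i"
proof -
  interpret conductances: product_prob_space edge_law UNIV
    by (rule product_prob_spaceI) (simp add: prob_space_cond_law split: prod.split)
  interpret pair_sigma_finite offspring_space conductance_space
    by (intro pair_sigma_finite.intro prob_space_imp_sigma_finite prob_space_conductance_space
        prob_space_PiM prob_space_measure_pmf)
  have "AE U in conductance_space. 0 < U i" for i
  proof -
    obtain c k m where i: "i = (c, k, m)" by (cases i)
    interpret prob_space "cond_law \<mu> k m" by (rule prob_space_cond_law)
    have "AE x in cond_law \<mu> k m. x \<in> {0<..}"
      by (subst AE_in_set_eq_1) (auto simp: sets_cond_law cond_law_pos measure_def)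
    then have "AE x in edge_law i. 0 < x" unfolding i prod.case by simp
    then show ?thesis by (rule conductances.AE_component[OF UNIV_I])
  qed
  then have "AE U in conductance_space. \<forall>i. 0 < U i" by (simp add: AE_all_countable)
  moreover have "Measurable.pred \<Omega> (\<lambda>\<omega>. \<forall>i. 0 < snd \<omega> i)" by measurable
  ultimately show ?thesis
    unfolding sample_space_def pred_def by (intro AE_pair_measure) simp_all
qed

end

section \<open>Measurability on the space of rooted weighted trees\<close>

lemma measurable_weight [measurable]: "(\<lambda>t. fst t r z) \<in> borel_measurable tree_space"
proof -
  have "fst \<in> measurable tree_space (PiM UNIV (\<lambda>_. PiM UNIV (\<lambda>_::nat list. borel)))"
    unfolding tree_space_def by (rule measurable_fst)
  then have "(\<lambda>t. fst t r) \<in> measurable tree_space (PiM UNIV (\<lambda>_::nat list. borel))"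
    by (rule measurable_compose) simp
  then show ?thesis by (rule measurable_compose) simp
qed

lemma measurable_root [measurable]: "snd \<in> measurable tree_space (count_space UNIV)"
  unfolding tree_space_def by simp

lemma measurable_root_weight [measurable]:
  "(\<lambda>t. fst t (snd t) z) \<in> borel_measurable tree_space"
  using measurable_compose_countable[where f="\<lambda>r t. fst t r z", OF _ measurable_root] by simp

lemma measurable_reroot [measurable]: "(\<lambda>t. reroot t z) \<in> measurable tree_space tree_space"
  unfolding reroot_def tree_space_def by simp

lemma pred_nbrs_eq [measurable]: "Measurable.pred tree_space (\<lambda>t. nbrs t = A)"
proof -
  have "Measurable.pred tree_space (\<lambda>t. \<forall>z. 0 < fst t (snd t) z \<longleftrightarrow> z \<in> A)"
    by measurable
  then show ?thesis by (simp add: nbrs_def set_eq_iff)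
qed

lemma pred_finite_nbrs [measurable]: "Measurable.pred tree_space (\<lambda>t. finite (nbrs t))"
proof -
  have "{t \<in> space tree_space. finite (nbrs t)}
          = (\<Union>A \<in> Collect finite. {t \<in> space tree_space. nbrs t = A})"
    by auto
  also have "\<dots> \<in> sets tree_space"
    by (intro sets.countable_UN' countable_Collect_finite) (auto simp: pred_def[symmetric])
  finally show ?thesis unfolding pred_def .
qed

lemma borel_measurable_sum_nbrs:
  assumes F: "\<And>z. (\<lambda>t. F t z) \<in> borel_measurable tree_space"
  shows "(\<lambda>t. \<Sum>z\<in>nbrs t. F t z :: real) \<in> borel_measurable tree_space"
proof -
  define B where "B t = (if finite (nbrs t) then nbrs t else {})" for t
  have c: "countable (Collect finite :: nat list set set)" by (rule countable_Collect_finite)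
  have B: "B \<in> measurable tree_space (count_space (Collect finite))"
    unfolding measurable_count_space_eq_countable[OF c]
  proof (intro conjI ballI)
    fix A :: "nat list set"
    have "Measurable.pred tree_space
            (\<lambda>t. (finite (nbrs t) \<and> nbrs t = A) \<or> (\<not> finite (nbrs t) \<and> A = {}))"
      by measurable
    moreover have "B -` {A} \<inter> space tree_space = {t \<in> space tree_space.
        (finite (nbrs t) \<and> nbrs t = A) \<or> (\<not> finite (nbrs t) \<and> A = {})}"
      by (auto simp: B_def split: if_splits)
    ultimately show "B -` {A} \<inter> space tree_space \<in> sets tree_space"
      unfolding pred_def by simp
  qed (auto simp: B_def)
  have "(\<lambda>t. \<Sum>z\<in>B t. F t z) \<in> borel_measurable tree_space"
    by (rule measurable_compose_countable'[OF _ B c]) (use F in auto)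
  moreover have "(\<Sum>z\<in>B t. F t z) = (\<Sum>z\<in>nbrs t. F t z)" for t
    by (simp add: B_def)
  ultimately show ?thesis by simp
qed

lemma borel_measurable_degree [measurable]:
  "(\<lambda>t. real (card (nbrs t))) \<in> borel_measurable tree_space"
  using borel_measurable_sum_nbrs[of "\<lambda>_ _. 1"] by simp

section \<open>The integrand of \<open>(f, G g)\<close>\<close>

definition nbr_sum :: "(wtree \<Rightarrow> real) \<Rightarrow> wtree \<Rightarrow> real" where
  "nbr_sum g t = (\<Sum>z\<in>nbrs t. fst t (snd t) z * g (reroot t z))"

definition pairing :: "(wtree \<Rightarrow> real) \<Rightarrow> (wtree \<Rightarrow> real) \<Rightarrow> wtree \<Rightarrow> real" where
  "pairing h k t = h t * nbr_sum k t / real (card (nbrs t))"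

lemma pi_root_eq_nbr_sum: "pi_root t = nbr_sum (\<lambda>_. 1) t"
  unfolding pi_root_def nbr_sum_def by simp

lemma Gop_eq_nbr_sum: "Gop g t = nbr_sum g t / pi_root t"
  unfolding Gop_def nbr_sum_def ..

lemma pi_root_nonneg: "0 \<le> pi_root t"
  unfolding pi_root_def nbrs_def by (intro sum_nonneg) auto

lemma mass_nonneg: "0 \<le> mass t"
  unfolding mass_def using pi_root_nonneg by simp

lemma mass_mult_Gop: "mass t * Gop g t = nbr_sum g t / real (card (nbrs t))"
proof (cases "pi_root t = 0")
  case True
  have "nbr_sum g t = 0"
  proof (cases "finite (nbrs t) \<and> nbrs t \<noteq> {}")
    case True
    then have "0 < pi_root t"
      unfolding pi_root_def by (intro sum_pos) (auto simp: nbrs_def)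
    with \<open>pi_root t = 0\<close> show ?thesis by simp
  next
    case False
    then show ?thesis unfolding nbr_sum_def by auto
  qed
  with True show ?thesis by (simp add: Gop_eq_nbr_sum)
next
  case False
  then show ?thesis unfolding mass_def Gop_eq_nbr_sum by (simp add: field_simps)
qed

lemma mass_mult_Gop_mult: "mass t * (h t * Gop k t) = pairing h k t"
  unfolding pairing_def using mass_mult_Gop[of t k]
  by (metis mult.left_commute times_divide_eq_right)

lemma pairing_const_one: "pairing h (\<lambda>_. 1) t = h t * mass t"
  unfolding pairing_def mass_def pi_root_eq_nbr_sum by simp

lemma pairing_diff:
  "pairing (\<lambda>t. a1 t - a2 t) (\<lambda>t. b1 t - b2 t) t
     = pairing a1 b1 t - pairing a1 b2 t - pairing a2 b1 t + pairing a2 b2 t"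
proof -
  have "nbr_sum (\<lambda>t. b1 t - b2 t) t = nbr_sum b1 t - nbr_sum b2 t"
    unfolding nbr_sum_def by (simp add: right_diff_distrib sum_subtractf)
  then show ?thesis
    unfolding pairing_def
    by (simp add: left_diff_distrib right_diff_distrib diff_divide_distrib)
qed

lemma pairing_nonneg: "(\<And>s. 0 \<le> h s) \<Longrightarrow> (\<And>s. 0 \<le> k s) \<Longrightarrow> 0 \<le> pairing h k t"
  unfolding pairing_def nbr_sum_def nbrs_def
  by (intro divide_nonneg_nonneg mult_nonneg_nonneg sum_nonneg) auto

lemma pairing_le_squares:
  assumes "\<And>s. 0 \<le> k s"
  shows "pairing h k t \<le> (pairing (\<lambda>s. (h s)\<^sup>2) (\<lambda>_. 1) t + pairing (\<lambda>_. 1) (\<lambda>s. (k s)\<^sup>2) t) / 2"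
proof -
  have am_gm: "h t * y \<le> ((h t)\<^sup>2 + y\<^sup>2) / 2" for y
    using sum_squares_bound[of "h t" y] by simp
  have "h t * nbr_sum k t = (\<Sum>z\<in>nbrs t. fst t (snd t) z * (h t * k (reroot t z)))"
    unfolding nbr_sum_def by (simp add: sum_distrib_left ac_simps)
  also have "\<dots> \<le> (\<Sum>z\<in>nbrs t. fst t (snd t) z * (((h t)\<^sup>2 + (k (reroot t z))\<^sup>2) / 2))"
    by (intro sum_mono mult_left_mono am_gm) (auto simp: nbrs_def)
  also have "\<dots> = ((h t)\<^sup>2 * nbr_sum (\<lambda>_. 1) t + nbr_sum (\<lambda>s. (k s)\<^sup>2) t) / 2"
    unfolding nbr_sum_def
    by (simp add: sum_distrib_left sum.distrib algebra_simps sum_divide_distrib[symmetric])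
  finally have "h t * nbr_sum k t / real (card (nbrs t))
      \<le> ((h t)\<^sup>2 * nbr_sum (\<lambda>_. 1) t + nbr_sum (\<lambda>s. (k s)\<^sup>2) t) / 2 / real (card (nbrs t))"
    by (rule divide_right_mono) simp
  then show ?thesis
    unfolding pairing_def by (simp add: add_divide_distrib)
qed

lemma borel_measurable_nbr_sum:
  assumes [measurable]: "k \<in> borel_measurable tree_space"
  shows "nbr_sum k \<in> borel_measurable tree_space"
  unfolding nbr_sum_def by (intro borel_measurable_sum_nbrs) measurable

lemma borel_measurable_pairing:
  assumes "h \<in> borel_measurable tree_space" "k \<in> borel_measurable tree_space"
  shows "pairing h k \<in> borel_measurable tree_space"
  unfolding pairing_def
  by (intro borel_measurable_divide borel_measurable_times borel_measurable_nbr_sum assms)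
    measurable

lemma borel_measurable_mass: "mass \<in> borel_measurable tree_space"
  unfolding mass_def[abs_def] pi_root_eq_nbr_sum
  by (intro borel_measurable_divide borel_measurable_nbr_sum) measurable

lemma borel_measurable_Gop:
  "g \<in> borel_measurable tree_space \<Longrightarrow> Gop g \<in> borel_measurable tree_space"
  unfolding Gop_eq_nbr_sum[abs_def] pi_root_eq_nbr_sum
  by (intro borel_measurable_divide borel_measurable_nbr_sum) simp_all

section \<open>Reversibility for non-negative functions\<close>

lemma iso_invariant_involution:
  assumes "iso_invariant F" and \<phi>: "\<And>x. \<phi> (\<phi> x) = x"
  shows "F (\<lambda>x y. w (\<phi> x) (\<phi> y), \<phi> r) = F (w, r)"
proof -
  have "inv \<phi> = \<phi>" using \<phi> by (intro inv_equality)
  with assms show ?thesis unfolding iso_invariant_def by (metis bij_involution)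
qed

definition root_edge_term ::
  "(wtree \<Rightarrow> real) \<Rightarrow> (wtree \<Rightarrow> real) \<Rightarrow> nat \<Rightarrow> gw_sample \<Rightarrow> real"
where
  "root_edge_term h k j \<omega> =
     gw_weights (fst \<omega>) (snd \<omega>) [] [j] * h (gw_tree \<omega>) * k (reroot (gw_tree \<omega>) [j])"

lemma root_edge_term_swap_branch:
  assumes h: "iso_invariant h" and k: "iso_invariant k" and j: "j \<le> fst \<omega> []"
  shows "root_edge_term h k j (fst \<omega> \<circ> swap_branch j, snd \<omega> \<circ> swap_branch_idx j)
           = root_edge_term h k 0 \<omega>"
proof -
  obtain N U where \<omega>: "\<omega> = (N, U)" by (cases \<omega>)
  define w where "w = gw_weights N U"
  have "gw_weights (N \<circ> swap_branch j) (U \<circ> swap_branch_idx j)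
      = (\<lambda>x y. w (swap_branch j x) (swap_branch j y))"
    using j unfolding w_def \<omega> by (intro ext gw_weights_swap_branch) (simp add: nch_def)
  moreover have "h (\<lambda>x y. w (swap_branch j x) (swap_branch j y), []) = h (w, [])"
    using iso_invariant_involution[OF h, of "swap_branch j" w "[]"] by simp
  moreover have "k (\<lambda>x y. w (swap_branch j x) (swap_branch j y), [j]) = k (w, [0])"
    using iso_invariant_involution[OF k, of "swap_branch j" w "[0]"] by simp
  ultimately show ?thesis
    unfolding root_edge_term_def gw_tree_def reroot_def \<omega> w_def by simp
qed

lemma root_edge_term_flip_root:
  assumes h: "iso_invariant h" and k: "iso_invariant k"
  shows "root_edge_term h k 0 (fst \<omega> \<circ> flip_root, snd \<omega> \<circ> flip_root_idx) = root_edge_term k h 0 \<omega>"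
proof -
  obtain N U where \<omega>: "\<omega> = (N, U)" by (cases \<omega>)
  define w where "w = gw_weights N U"
  have "gw_weights (N \<circ> flip_root) (U \<circ> flip_root_idx) = (\<lambda>x y. w (flip_root x) (flip_root y))"
    unfolding w_def by (intro ext gw_weights_flip_root)
  moreover have "h (\<lambda>x y. w (flip_root x) (flip_root y), []) = h (w, [0])"
    using iso_invariant_involution[OF h, of flip_root w "[0]"] by simp
  moreover have "k (\<lambda>x y. w (flip_root x) (flip_root y), [0]) = k (w, [])"
    using iso_invariant_involution[OF k, of flip_root w "[]"] by simp
  moreover have "w [0] [] = w [] [0]" unfolding w_def by (rule gw_weights_sym)
  ultimately show ?thesis
    unfolding root_edge_term_def gw_tree_def reroot_def \<omega> w_def by simp
qed

lemma nbrs_gw_tree: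
  assumes "\<forall>i. 0 < snd \<omega> i"
  shows "nbrs (gw_tree \<omega>) = (\<lambda>j. [j]) ` {..fst \<omega> []}"
proof -
  have "0 < gw_weights (fst \<omega>) (snd \<omega>) [] z \<longleftrightarrow> is_child (fst \<omega>) [] z" for z
    using assms by (auto simp: gw_weights_is_child edge_w_def is_child_def)
  moreover have "is_child N [] z \<longleftrightarrow> z \<in> (\<lambda>j. [j]) ` {..N []}" for N z
    by (cases z) (auto simp: is_child_def nch_def)
  ultimately show ?thesis
    unfolding nbrs_def gw_tree_def by auto
qed

definition branch_share ::
  "(wtree \<Rightarrow> real) \<Rightarrow> (wtree \<Rightarrow> real) \<Rightarrow> nat \<Rightarrow> nat \<Rightarrow> gw_sample \<Rightarrow> ennreal"
where
  "branch_share h k i j \<omega> =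
     (if j \<le> fst \<omega> [] then ennreal (root_edge_term h k i \<omega> / real (Suc (fst \<omega> []))) else 0)"

lemma pairing_gw_tree_eq_suminf:
  assumes "\<And>t. 0 \<le> h t" "\<And>t. 0 \<le> k t" and pos: "\<forall>i. 0 < snd \<omega> i"
  shows "ennreal (pairing h k (gw_tree \<omega>)) = (\<Sum>j. branch_share h k j j \<omega>)"
proof -
  define n where "n = fst \<omega> []"
  have inj: "inj_on (\<lambda>j::nat. [j]) {..n}" by (auto simp: inj_on_def)
  have "pairing h k (gw_tree \<omega>) = (\<Sum>j\<le>n. root_edge_term h k j \<omega> / real (Suc n))"
    unfolding pairing_def nbr_sum_def root_edge_term_def nbrs_gw_tree[OF pos, folded n_def]
      sum.reindex[OF inj] card_image[OF inj]
    by (simp add: sum_distrib_left sum_divide_distrib ac_simps gw_tree_def)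
  also have "ennreal \<dots> = (\<Sum>j\<le>n. branch_share h k j j \<omega>)"
  proof -
    have "0 \<le> gw_weights (fst \<omega>) (snd \<omega>) x y" for x y
      using pos by (intro gw_weights_nonneg less_imp_le) blast
    with assms show ?thesis
      by (subst sum_ennreal[symmetric])
        (auto simp: branch_share_def n_def root_edge_term_def intro!: sum.cong)
  qed
  also have "\<dots> = (\<Sum>j. branch_share h k j j \<omega>)"
    by (rule suminf_finite[symmetric]) (auto simp: branch_share_def n_def)
  finally show ?thesis .
qed

lemma suminf_branch_share: "(\<Sum>j. branch_share h k 0 j \<omega>) = ennreal (root_edge_term h k 0 \<omega>)"
proof -
  define n where "n = fst \<omega> []"
  define A where "A = root_edge_term h k 0 \<omega>"
  have "(\<Sum>j. branch_share h k 0 j \<omega>) = (\<Sum>j\<le>n. ennreal (A / real (Suc n)))"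
    by (subst suminf_finite[of "{..n}"]) (auto simp: branch_share_def n_def A_def)
  also have "\<dots> = ennreal A"
  proof (cases "0 \<le> A")
    case True
    then show ?thesis
      by (simp add: ennreal_of_nat_eq_real_of_nat ennreal_mult[symmetric] del: of_nat_Suc)
  next
    case False
    then show ?thesis by (simp add: ennreal_neg divide_nonpos_pos)
  qed
  finally show ?thesis by (simp add: A_def)
qed

context weighted_GW
begin

lemma borel_measurable_root_edge_term:
  assumes [measurable]: "h \<in> borel_measurable tree_space" "k \<in> borel_measurable tree_space"
  shows "root_edge_term h k j \<in> borel_measurable \<Omega>"
proof -
  have "(\<lambda>\<omega>. k (reroot (gw_tree \<omega>) [j])) \<in> borel_measurable \<Omega>"
    using measurable_compose[OF measurable_gw_tree measurable_reroot] by measurable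
  then show ?thesis unfolding root_edge_term_def by measurable
qed

lemma borel_measurable_branch_share:
  assumes "h \<in> borel_measurable tree_space" "k \<in> borel_measurable tree_space"
  shows "branch_share h k i j \<in> borel_measurable \<Omega>"
  using borel_measurable_root_edge_term[OF assms] unfolding branch_share_def by measurable

text \<open>
  At the root, \<open>pairing h k\<close> is the sum of the diagonal shares \<open>branch_share h k j j\<close>;
  exchanging the branches \<open>[0]\<close> and \<open>[j]\<close> turns each of them into \<open>branch_share h k 0 j\<close>.
\<close>

lemma nn_integral_pairing_eq_root_edge_term:
  assumes hm: "h \<in> borel_measurable tree_space" and km: "k \<in> borel_measurable tree_space"
    and "\<And>t. 0 \<le> h t" "\<And>t. 0 \<le> k t"
    and hi: "iso_invariant h" and ki: "iso_invariant k"
  shows "(\<integral>\<^sup>+t. ennreal (pairing h k t) \<partial>augGW p \<mu>) = (\<integral>\<^sup>+\<omega>. ennreal (root_edge_term h k 0 \<omega>) \<partial>\<Omega>)"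
proof -
  note share_meas = borel_measurable_branch_share[OF hm km]
  have "(\<integral>\<^sup>+t. ennreal (pairing h k t) \<partial>augGW p \<mu>) = (\<integral>\<^sup>+\<omega>. ennreal (pairing h k (gw_tree \<omega>)) \<partial>\<Omega>)"
    unfolding augGW_def' using borel_measurable_pairing[OF hm km]
    by (intro nn_integral_distr) simp_all
  also have "\<dots> = (\<integral>\<^sup>+\<omega>. (\<Sum>j. branch_share h k j j \<omega>) \<partial>\<Omega>)"
    using AE_conductances_pos
    by (rule nn_integral_cong_AE[OF AE_mp]) (simp add: pairing_gw_tree_eq_suminf assms)
  also have "\<dots> = (\<Sum>j. \<integral>\<^sup>+\<omega>. branch_share h k j j \<omega> \<partial>\<Omega>)"
    using share_meas by (rule nn_integral_suminf)
  also have "\<dots> = (\<Sum>j. \<integral>\<^sup>+\<omega>. branch_share h k 0 j \<omega> \<partial>\<Omega>)"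
  proof (intro suminf_cong)
    fix j
    have "(\<integral>\<^sup>+\<omega>. branch_share h k j j \<omega> \<partial>\<Omega>)
        = (\<integral>\<^sup>+\<omega>. branch_share h k j j (fst \<omega> \<circ> swap_branch j, snd \<omega> \<circ> swap_branch_idx j) \<partial>\<Omega>)"
      using share_meas
      by (rule nn_integral_relabel)
        (auto intro: bij_involution swap_branch_idx_swap_branch_idx simp: swap_branch_idx_def)
    also have "\<dots> = (\<integral>\<^sup>+\<omega>. branch_share h k 0 j \<omega> \<partial>\<Omega>)"
      by (intro nn_integral_cong) (simp add: branch_share_def root_edge_term_swap_branch[OF hi ki])
    finally show "(\<integral>\<^sup>+\<omega>. branch_share h k j j \<omega> \<partial>\<Omega>) = (\<integral>\<^sup>+\<omega>. branch_share h k 0 j \<omega> \<partial>\<Omega>)" .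
  qed
  also have "\<dots> = (\<integral>\<^sup>+\<omega>. ennreal (root_edge_term h k 0 \<omega>) \<partial>\<Omega>)"
    using share_meas by (simp add: nn_integral_suminf[symmetric] suminf_branch_share)
  finally show ?thesis .
qed

lemma nn_integral_pairing_swap:
  assumes hm: "h \<in> borel_measurable tree_space" and km: "k \<in> borel_measurable tree_space"
    and hp: "\<And>t. 0 \<le> h t" and kp: "\<And>t. 0 \<le> k t"
    and hi: "iso_invariant h" and ki: "iso_invariant k"
  shows "(\<integral>\<^sup>+t. ennreal (pairing h k t) \<partial>augGW p \<mu>) = (\<integral>\<^sup>+t. ennreal (pairing k h t) \<partial>augGW p \<mu>)"
proof -
  have "(\<integral>\<^sup>+\<omega>. ennreal (root_edge_term h k 0 \<omega>) \<partial>\<Omega>)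
      = (\<integral>\<^sup>+\<omega>. ennreal (root_edge_term h k 0 (fst \<omega> \<circ> flip_root, snd \<omega> \<circ> flip_root_idx)) \<partial>\<Omega>)"
    using borel_measurable_root_edge_term[OF hm km]
    by (intro nn_integral_relabel)
      (auto intro: bij_involution flip_root_idx_flip_root_idx
        simp: flip_root_idx_def cond_law_sym split: prod.splits)
  also have "\<dots> = (\<integral>\<^sup>+\<omega>. ennreal (root_edge_term k h 0 \<omega>) \<partial>\<Omega>)"
    by (simp add: root_edge_term_flip_root[OF hi ki])
  finally show ?thesis
    by (simp add: nn_integral_pairing_eq_root_edge_term assms)
qed

end

section \<open>Square-integrable functions\<close>

lemma iso_invariant_comp: "iso_invariant f \<Longrightarrow> iso_invariant (\<lambda>t. \<phi> (f t))"
  unfolding iso_invariant_def by simp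

lemma measurable_augGW [simp]: "measurable (augGW p \<mu>) N = measurable tree_space N"
  unfolding augGW_def by (rule measurable_cong_sets) simp_all

definition pos_part :: "('a \<Rightarrow> real) \<Rightarrow> 'a \<Rightarrow> real" where
  "pos_part f x = max (f x) 0"

definition neg_part :: "('a \<Rightarrow> real) \<Rightarrow> 'a \<Rightarrow> real" where
  "neg_part f x = max (- f x) 0"

lemma pos_part_nonneg [simp]: "0 \<le> pos_part f x"
  by (simp add: pos_part_def)

lemma neg_part_nonneg [simp]: "0 \<le> neg_part f x"
  by (simp add: neg_part_def)

lemma pairing_eq_parts:
  "pairing f g t = pairing (pos_part f) (pos_part g) t - pairing (pos_part f) (neg_part g) t
     - pairing (neg_part f) (pos_part g) t + pairing (neg_part f) (neg_part g) t"
proof -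
  have "f = (\<lambda>s. pos_part f s - neg_part f s)" "g = (\<lambda>s. pos_part g s - neg_part g s)"
    by (auto simp: pos_part_def neg_part_def max_def)
  then show ?thesis by (metis pairing_diff)
qed

context weighted_GW
begin

definition invariant_L2 :: "(wtree \<Rightarrow> real) \<Rightarrow> bool" where
  "invariant_L2 h \<longleftrightarrow> h \<in> borel_measurable tree_space \<and> iso_invariant h
     \<and> integrable (augGW p \<mu>) (\<lambda>t. (h t)\<^sup>2 * mass t)"

lemma invariant_L2_comp:
  assumes "invariant_L2 f" and \<phi>: "\<phi> \<in> borel_measurable borel" "\<And>x. \<bar>\<phi> x\<bar> \<le> \<bar>x\<bar>"
  shows "invariant_L2 (\<lambda>t. \<phi> (f t))"
  unfolding invariant_L2_def
proof (intro conjI)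
  show "(\<lambda>t. \<phi> (f t)) \<in> borel_measurable tree_space"
    using assms by (simp add: invariant_L2_def measurable_compose[OF _ \<phi>(1)])
  show "iso_invariant (\<lambda>t. \<phi> (f t))"
    using assms by (simp add: invariant_L2_def iso_invariant_comp)
  show "integrable (augGW p \<mu>) (\<lambda>t. (\<phi> (f t))\<^sup>2 * mass t)"
  proof (rule Bochner_Integration.integrable_bound)
    show "integrable (augGW p \<mu>) (\<lambda>t. (f t)\<^sup>2 * mass t)"
      using assms by (simp add: invariant_L2_def)
    have [measurable]: "f \<in> borel_measurable tree_space"
      using assms by (simp add: invariant_L2_def)
    show "(\<lambda>t. (\<phi> (f t))\<^sup>2 * mass t) \<in> borel_measurable (augGW p \<mu>)"
      using borel_measurable_mass \<phi>(1) by simp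
    have "(\<phi> x)\<^sup>2 \<le> x\<^sup>2" for x
      using \<phi>(2)[of x] by (metis abs_ge_zero power2_abs power_mono)
    then show "AE t in augGW p \<mu>. norm ((\<phi> (f t))\<^sup>2 * mass t) \<le> norm ((f t)\<^sup>2 * mass t)"
      using mass_nonneg by (intro AE_I2) (simp add: abs_mult mult_right_mono)
  qed
qed

lemma integrable_pairing_nonneg:
  assumes h: "invariant_L2 h" and k: "invariant_L2 k"
    and hp: "\<And>t. 0 \<le> h t" and kp: "\<And>t. 0 \<le> k t"
  shows "integrable (augGW p \<mu>) (pairing h k)"
proof (rule Bochner_Integration.integrable_bound)
  have [measurable]: "h \<in> borel_measurable tree_space" "k \<in> borel_measurable tree_space"
    using h k by (simp_all add: invariant_L2_def)
  show "integrable (augGW p \<mu>)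
          (\<lambda>t. (pairing (\<lambda>s. (h s)\<^sup>2) (\<lambda>_. 1) t + pairing (\<lambda>_. 1) (\<lambda>s. (k s)\<^sup>2) t) / 2)"
  proof -
    have h2: "integrable (augGW p \<mu>) (pairing (\<lambda>s. (h s)\<^sup>2) (\<lambda>_. 1))"
      using h by (simp add: invariant_L2_def pairing_const_one[abs_def])
    have "(\<integral>\<^sup>+t. ennreal (pairing (\<lambda>_. 1) (\<lambda>s. (k s)\<^sup>2) t) \<partial>augGW p \<mu>)
        = (\<integral>\<^sup>+t. ennreal (pairing (\<lambda>s. (k s)\<^sup>2) (\<lambda>_. 1) t) \<partial>augGW p \<mu>)"
      using k unfolding invariant_L2_def
      by (intro nn_integral_pairing_swap) (auto intro: iso_invariant_comp simp: iso_invariant_def)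
    also have "\<dots> = (\<integral>\<^sup>+t. ennreal (norm ((k t)\<^sup>2 * mass t)) \<partial>augGW p \<mu>)"
      by (intro nn_integral_cong) (simp add: pairing_const_one mass_nonneg)
    also have "\<dots> < \<infinity>"
      using k by (simp add: invariant_L2_def integrable_iff_bounded)
    finally have "integrable (augGW p \<mu>) (pairing (\<lambda>_. 1) (\<lambda>s. (k s)\<^sup>2))"
      by (intro integrableI_nonneg) (auto intro!: pairing_nonneg borel_measurable_pairing)
    with h2 show ?thesis by (intro integrable_divide Bochner_Integration.integrable_add)
  qed
  show "pairing h k \<in> borel_measurable (augGW p \<mu>)"
    by (simp add: borel_measurable_pairing)
  show "AE t in augGW p \<mu>. norm (pairing h k t)
          \<le> norm ((pairing (\<lambda>s. (h s)\<^sup>2) (\<lambda>_. 1) t + pairing (\<lambda>_. 1) (\<lambda>s. (k s)\<^sup>2) t) / 2)"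
  proof (intro AE_I2)
    fix t
    have "0 \<le> pairing h k t" by (rule pairing_nonneg[OF hp kp])
    moreover have "pairing h k t
        \<le> (pairing (\<lambda>s. (h s)\<^sup>2) (\<lambda>_. 1) t + pairing (\<lambda>_. 1) (\<lambda>s. (k s)\<^sup>2) t) / 2"
      by (rule pairing_le_squares[OF kp])
    ultimately show "norm (pairing h k t)
        \<le> norm ((pairing (\<lambda>s. (h s)\<^sup>2) (\<lambda>_. 1) t + pairing (\<lambda>_. 1) (\<lambda>s. (k s)\<^sup>2) t) / 2)"
      by simp
  qed
qed

lemma integral_pairing_swap_nonneg:
  assumes h: "invariant_L2 h" and k: "invariant_L2 k"
    and hp: "\<And>t. 0 \<le> h t" and kp: "\<And>t. 0 \<le> k t"
  shows "(\<integral>t. pairing h k t \<partial>augGW p \<mu>) = (\<integral>t. pairing k h t \<partial>augGW p \<mu>)"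
proof -
  have [measurable]: "h \<in> borel_measurable tree_space" "k \<in> borel_measurable tree_space"
    using h k by (simp_all add: invariant_L2_def)
  have "(\<integral>\<^sup>+t. ennreal (pairing h k t) \<partial>augGW p \<mu>) = (\<integral>\<^sup>+t. ennreal (pairing k h t) \<partial>augGW p \<mu>)"
    using h k hp kp by (intro nn_integral_pairing_swap) (simp_all add: invariant_L2_def)
  moreover have "(\<integral>t. pairing a b t \<partial>augGW p \<mu>)
      = enn2real (\<integral>\<^sup>+t. ennreal (pairing a b t) \<partial>augGW p \<mu>)"
    if "a \<in> borel_measurable tree_space" "b \<in> borel_measurable tree_space"
      "\<And>t. 0 \<le> a t" "\<And>t. 0 \<le> b t" for a b
    using that
    by (intro integral_eq_nn_integral) (auto intro!: pairing_nonneg borel_measurable_pairing)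
  ultimately show ?thesis
    using hp kp by simp
qed

lemma invariant_L2_parts:
  assumes "invariant_L2 f"
  shows "invariant_L2 (pos_part f)" "invariant_L2 (neg_part f)"
  using invariant_L2_comp[OF assms, of "\<lambda>x. max x 0"]
    invariant_L2_comp[OF assms, of "\<lambda>x. max (- x) 0"]
  by (simp_all add: pos_part_def[abs_def] neg_part_def[abs_def])

lemma integrable_pairing:
  assumes f: "invariant_L2 f" and g: "invariant_L2 g"
  shows "integrable (augGW p \<mu>) (pairing f g)"
proof -
  note parts = invariant_L2_parts[OF f] invariant_L2_parts[OF g]
  have "integrable (augGW p \<mu>) (pairing a b)"
    if "a \<in> {pos_part f, neg_part f}" "b \<in> {pos_part g, neg_part g}" for a b
    using that parts by (auto intro: integrable_pairing_nonneg)
  then show ?thesis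
    by (subst pairing_eq_parts[abs_def]) auto
qed

lemma integral_pairing_swap:
  assumes f: "invariant_L2 f" and g: "invariant_L2 g"
  shows "(\<integral>t. pairing f g t \<partial>augGW p \<mu>) = (\<integral>t. pairing g f t \<partial>augGW p \<mu>)"
proof -
  note parts = invariant_L2_parts[OF f] invariant_L2_parts[OF g]
  note swap = integral_pairing_swap_nonneg[OF parts(1) parts(3)]
    integral_pairing_swap_nonneg[OF parts(1) parts(4)]
    integral_pairing_swap_nonneg[OF parts(2) parts(3)]
    integral_pairing_swap_nonneg[OF parts(2) parts(4)]
  show ?thesis
    by (subst (1 2) pairing_eq_parts[abs_def]) (simp add: integrable_pairing parts swap)
qed

end

lemma Pstat_integrable_iff:
  assumes "F \<in> borel_measurable tree_space"
  shows "integrable (Pstat p \<mu>) F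
     \<longleftrightarrow> integrable (augGW p \<mu>) (\<lambda>t. mass t / enn2real (gamma_const p \<mu>) * F t)"
  unfolding Pstat_def using assms borel_measurable_mass mass_nonneg
  by (subst integrable_density) auto

lemma integral_Pstat:
  assumes "F \<in> borel_measurable tree_space"
  shows "(\<integral>t. F t \<partial>Pstat p \<mu>) = (\<integral>t. mass t / enn2real (gamma_const p \<mu>) * F t \<partial>augGW p \<mu>)"
  unfolding Pstat_def using assms borel_measurable_mass mass_nonneg
  by (subst integral_density) auto

lemma (in weighted_GW) invariant_L2_if_Pstat:
  assumes "0 < enn2real (gamma_const p \<mu>)" and [measurable]: "f \<in> borel_measurable tree_space"
    and "iso_invariant f" and "integrable (Pstat p \<mu>) (\<lambda>t. (f t)\<^sup>2)"
  shows "invariant_L2 f"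
proof -
  let ?c = "enn2real (gamma_const p \<mu>)"
  have "integrable (augGW p \<mu>) (\<lambda>t. mass t / ?c * (f t)\<^sup>2)"
    using assms by (simp add: Pstat_integrable_iff)
  then have "integrable (augGW p \<mu>) (\<lambda>t. ?c * (mass t / ?c * (f t)\<^sup>2))"
    by (rule integrable_mult_right)
  with assms show ?thesis
    by (simp add: invariant_L2_def ac_simps)
qed

theorem lemma3p1:
  fixes p :: "nat pmf" and \<mu> :: "nat \<Rightarrow> nat \<Rightarrow> real measure" and f g :: "wtree \<Rightarrow> real"
  assumes p0: "pmf p 0 = 0"
    and mean_fin: "integrable (measure_pmf p) real"
    and mean_gt1: "measure_pmf.expectation p real > 1"
    and mu_prob: "\<And>k m. 1 \<le> k \<Longrightarrow> 1 \<le> m \<Longrightarrow> prob_space (\<mu> k m)"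
    and mu_borel: "\<And>k m. 1 \<le> k \<Longrightarrow> 1 \<le> m \<Longrightarrow> sets (\<mu> k m) = sets borel"
    and mu_pos: "\<And>k m. 1 \<le> k \<Longrightarrow> 1 \<le> m \<Longrightarrow> emeasure (\<mu> k m) {0<..} = 1"
    and mu_sym: "\<And>k m. 1 \<le> k \<Longrightarrow> 1 \<le> m \<Longrightarrow> \<mu> k m = \<mu> m k"
    and gamma_fin: "gamma_const p \<mu> < \<infinity>"
    and f_meas: "f \<in> borel_measurable tree_space" and g_meas: "g \<in> borel_measurable tree_space"
    and f_L2: "integrable (Pstat p \<mu>) (\<lambda>t. (f t)\<^sup>2)"
    and g_L2: "integrable (Pstat p \<mu>) (\<lambda>t. (g t)\<^sup>2)"
    and f_inv: "iso_invariant f" and g_inv: "iso_invariant g"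
  shows "integrable (Pstat p \<mu>) (\<lambda>t. f t * Gop g t)
       \<and> integrable (Pstat p \<mu>) (\<lambda>t. Gop f t * g t)
       \<and> (\<integral>t. f t * Gop g t \<partial>Pstat p \<mu>) = (\<integral>t. Gop f t * g t \<partial>Pstat p \<mu>)"
  \<comment> \<open>If \<open>enn2real \<gamma> = 0\<close>, the density
     \<open>mass / enn2real \<gamma>\<close> vanishes (\<open>x / 0 = 0\<close>) and both sides are trivially 0.\<close>
proof -
  interpret weighted_GW p \<mu>
    by (rule weighted_GW.intro) (fact mu_prob mu_borel mu_pos mu_sym)+
  let ?c = "enn2real (gamma_const p \<mu>)"
  note [measurable] = f_meas g_meas
  have mass_Gop_f_g: "mass t * (Gop f t * g t) = pairing g f t" for t
    using mass_mult_Gop_mult[of t g f] by (simp add: ac_simps)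
  have "integrable (augGW p \<mu>) (pairing f g) \<and> integrable (augGW p \<mu>) (pairing g f)
          \<and> (\<integral>t. pairing f g t \<partial>augGW p \<mu>) = (\<integral>t. pairing g f t \<partial>augGW p \<mu>)" if "0 < ?c"
    using invariant_L2_if_Pstat[OF that f_meas f_inv f_L2]
      invariant_L2_if_Pstat[OF that g_meas g_inv g_L2]
    by (simp add: integrable_pairing integral_pairing_swap)
  then show ?thesis
    using enn2real_nonneg[of "gamma_const p \<mu>"] borel_measurable_Gop
    by (cases "?c = 0")
      (simp_all add: Pstat_integrable_iff integral_Pstat mass_mult_Gop_mult mass_Gop_f_g)
qed

end
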